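(* Let $p$ be a prime and let $q\in\mathbb{C}_p$ with $|1-q|_p<p^{-1/(p-1)}$ and $q\neq 1$. Then the numbers $\widetilde{\beta}_{n,q}=\int_{\mathbb{Z}_p}[x]_q^n\,d\mu_0(x)$, $n\ge 0$, satisfy $\widetilde{\beta}_{0,q}=1$ and, for every $n\ge 1$, $$\sum_{k=0}^{n}\binom{n}{k}q^k\,\widetilde{\beta}_{k,q}-\widetilde{\beta}_{n,q}=\begin{cases}\dfrac{\log q}{q-1}, & n=1,\\[2mm] 0, & n>1.\end{cases}$$ Moreover, for every $n\ge 0$, $$\widetilde{\beta}_{n,q}=\frac{1}{(1-q)^n}\left(1+\sum_{l=1}^{n}\binom{n}{l}(-1)^{l-1}\frac{l\log q}{1-q^{l}}\right).$$
   Context: $\mathbb{Z}_p$, $\mathbb{Q}_p$, $\mathbb{C}_p$ denote the $p$-adic integers, the $p$-adic numbers, and the completion of an algebraic closure of $\mathbb{Q}_p$. For $q\in\mathbb{C}_p$ with $|1-q|_p<p^{-1/(p-1)}$ one sets $q^x=\exp(x\log q)$ for $x\in\mathbb{Z}_p$ ($p$-adic exponential and logarithm), and $[x]_q=\frac{1-q^x}{1-q}$. For a uniformly differentiable function $f:\mathbb{Z}_p\to\mathbb{C}_p$, the $p$-adic invariant (Volkenborn) integral is $\int_{\mathbb{Z}_p}f(x)\,d\mu_0(x)=\lim_{N\to\infty}p^{-N}\sum_{x=0}^{p^N-1}f(x)$. The modified $q$-Bernoulli numbers are $\widetilde{\beta}_{n,q}=\int_{\mathbb{Z}_p}[x]_q^n\,d\mu_0(x)$.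 *)

theory Defs
  imports "HOL-Analysis.Analysis" "HOL-Computational_Algebra.Polynomial"
begin

definition nonarch_abs :: "('a::field \<Rightarrow> real) \<Rightarrow> bool" where
  "nonarch_abs v \<longleftrightarrow>
     (\<forall>x. v x \<ge> 0) \<and> (\<forall>x. v x = 0 \<longleftrightarrow> x = 0) \<and>
     (\<forall>x y. v (x * y) = v x * v y) \<and>
     (\<forall>x y. v (x + y) \<le> max (v x) (v y))"

definition vtendsto :: "('a::field \<Rightarrow> real) \<Rightarrow> (nat \<Rightarrow> 'a) \<Rightarrow> 'a \<Rightarrow> bool" where
  "vtendsto v f L \<longleftrightarrow> (\<forall>e>0. \<exists>N. \<forall>n\<ge>N. v (f n - L) < e)"

definition vconverges :: "('a::field \<Rightarrow> real) \<Rightarrow> (nat \<Rightarrow> 'a) \<Rightarrow> bool" where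
  "vconverges v f \<longleftrightarrow> (\<exists>L. vtendsto v f L)"

definition vlim :: "('a::field \<Rightarrow> real) \<Rightarrow> (nat \<Rightarrow> 'a) \<Rightarrow> 'a" where
  "vlim v f = (THE L. vtendsto v f L)"

definition vcauchy :: "('a::field \<Rightarrow> real) \<Rightarrow> (nat \<Rightarrow> 'a) \<Rightarrow> bool" where
  "vcauchy v f \<longleftrightarrow> (\<forall>e>0. \<exists>N. \<forall>m\<ge>N. \<forall>n\<ge>N. v (f m - f n) < e)"

definition alg_over_Q :: "'a::field_char_0 \<Rightarrow> bool" where
  "alg_over_Q x \<longleftrightarrow> (\<exists>f::int poly. f \<noteq> 0 \<and> poly (map_poly of_int f) x = 0)"

text \<open>(K, v) is (isometrically isomorphic to) C_p: a characteristic-0 field with a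
  non-archimedean absolute value normalised by v p = 1/p (hence restricting to the
  p-adic absolute value on Q), complete, algebraically closed, and in which the
  algebraic closure of Q is dense.  These properties characterise C_p up to
  isometric isomorphism.\<close>
definition Cp_field :: "nat \<Rightarrow> ('a::field_char_0 \<Rightarrow> real) \<Rightarrow> bool" where
  "Cp_field p v \<longleftrightarrow>
     nonarch_abs v \<and>
     v (of_nat p) = 1 / real p \<and>
     (\<forall>f. vcauchy v f \<longrightarrow> vconverges v f) \<and>
     (\<forall>f::'a poly. degree f > 0 \<longrightarrow> (\<exists>x. poly f x = 0)) \<and>
     (\<forall>x e. e > 0 \<longrightarrow> (\<exists>y. alg_over_Q y \<and> v (x - y) < e))"

definition vsuminf :: "('a::field \<Rightarrow> real) \<Rightarrow> (nat \<Rightarrow> 'a) \<Rightarrow> 'a" where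
  "vsuminf v a = vlim v (\<lambda>N. \<Sum>n<N. a n)"

definition plog :: "('a::field_char_0 \<Rightarrow> real) \<Rightarrow> 'a \<Rightarrow> 'a" where
  "plog v q = vsuminf v (\<lambda>n. (-1) ^ n * (q - 1) ^ (n + 1) / of_nat (n + 1))"

definition pexp :: "('a::field_char_0 \<Rightarrow> real) \<Rightarrow> 'a \<Rightarrow> 'a" where
  "pexp v x = vsuminf v (\<lambda>n. x ^ n / fact n)"

text \<open>q^x = exp(x log q), evaluated at x in N (the Volkenborn Riemann sums only use
  nonnegative integer arguments).\<close>
definition qpow :: "('a::field_char_0 \<Rightarrow> real) \<Rightarrow> 'a \<Rightarrow> nat \<Rightarrow> 'a" where
  "qpow v q x = pexp v (of_nat x * plog v q)"

definition qnum :: "('a::field_char_0 \<Rightarrow> real) \<Rightarrow> 'a \<Rightarrow> nat \<Rightarrow> 'a" where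
  "qnum v q x = (1 - qpow v q x) / (1 - q)"

definition volkenborn_sums :: "nat \<Rightarrow> (nat \<Rightarrow> 'a::field_char_0) \<Rightarrow> nat \<Rightarrow> 'a" where
  "volkenborn_sums p f N = (\<Sum>x<p ^ N. f x) / of_nat (p ^ N)"

definition volkenborn :: "nat \<Rightarrow> ('a::field_char_0 \<Rightarrow> real) \<Rightarrow> (nat \<Rightarrow> 'a) \<Rightarrow> 'a" where
  "volkenborn p v f = vlim v (volkenborn_sums p f)"

definition mod_qbernoulli :: "nat \<Rightarrow> ('a::field_char_0 \<Rightarrow> real) \<Rightarrow> 'a \<Rightarrow> nat \<Rightarrow> 'a" where
  "mod_qbernoulli p v q n = volkenborn p v (\<lambda>x. qnum v q x ^ n)"

end

theory Submission
  imports Defs "HOL-Computational_Algebra.Formal_Power_Series"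
begin

text \<open>
  For \<open>|y| < \<rho> = p^(-1/(p-1))\<close> the exponential series converges and is a homomorphism,
  and \<open>exp (log q) = q\<close>: in the ultrametric setting the double series \<open>\<Sum>\<^sub>n (log q)^n / n!\<close>
  may be rearranged by powers of \<open>q - 1\<close>, whose coefficients are those of \<open>exp \<circ> ln = 1 + X\<close>.
  Hence \<open>q^x = exp (x log q)\<close> and \<open>(q^(l p^N) - 1) / p^N \<rightarrow> l log q\<close>.
  Expanding \<open>[x]\<^sub>q^n = (1 - q)^(-n) \<Sum>\<^sub>l (n choose l) (-1)^l q^(l x)\<close>, the Volkenborn integral
  of \<open>q^(l x)\<close> is the limit of \<open>(q^(l p^N) - 1) / (p^N (q^l - 1))\<close>, i.e. \<open>l log q / (q^l - 1)\<close>,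
  which gives the closed form. The recursion is the integral of the telescoping difference
  \<open>[x + 1]\<^sub>q^n - [x]\<^sub>q^n\<close> (as \<open>q [x]\<^sub>q + 1 = [x + 1]\<^sub>q\<close>), whose Riemann sums are
  \<open>[p^N]\<^sub>q^n / p^N\<close>; these tend to \<open>log q / (q - 1)\<close> for \<open>n = 1\<close> and to \<open>0\<close> for \<open>n > 1\<close>.
\<close>

section \<open>Fields with a non-archimedean absolute value\<close>

locale nonarch_field =
  fixes v :: "'a::field \<Rightarrow> real"
  assumes nonarch: "nonarch_abs v"
begin

lemma v_nonneg [simp]: "0 \<le> v x"
  using nonarch by (simp add: nonarch_abs_def)

lemma v_eq_0_iff [simp]: "v x = 0 \<longleftrightarrow> x = 0"
  using nonarch by (simp add: nonarch_abs_def)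

lemma v_zero [simp]: "v 0 = 0"
  by simp

lemma v_pos_iff: "0 < v x \<longleftrightarrow> x \<noteq> 0"
  using v_nonneg[of x] v_eq_0_iff[of x] by linarith

lemma v_mult: "v (x * y) = v x * v y"
  using nonarch by (simp add: nonarch_abs_def)

lemma v_add_le: "v (x + y) \<le> max (v x) (v y)"
  using nonarch unfolding nonarch_abs_def by blast

lemma v_one [simp]: "v 1 = 1"
proof -
  have "v 1 = v 1 * v 1" using v_mult[of 1 1] by simp
  moreover have "v 1 \<noteq> 0" by simp
  ultimately show ?thesis by (metis mult_cancel_left1)
qed

lemma v_minus [simp]: "v (- x) = v x"
proof -
  have "v (-1) * v (-1) = 1" using v_mult[of "-1" "-1"] by simp
  moreover have "v (-1) \<ge> 0" by simp
  ultimately have "v (-1) = 1"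
    by (metis abs_of_nonneg mult_cancel_right1 real_sqrt_abs2 real_sqrt_mult_self)
  then show ?thesis using v_mult[of "-1" x] by simp
qed

lemma v_minus_commute: "v (x - y) = v (y - x)"
  using v_minus[of "x - y"] by simp

lemma v_diff_le: "v (x - y) \<le> max (v x) (v y)"
  using v_add_le[of x "- y"] by simp

lemma v_power: "v (x ^ n) = v x ^ n"
  by (induction n) (simp_all add: v_mult)

lemma v_inverse: "v (inverse x) = 1 / v x"
proof (cases "x = 0")
  case False
  then have "v x * v (inverse x) = 1" using v_mult[of x "inverse x"] by simp
  then show ?thesis using False by (auto simp: field_simps)
qed simp

lemma v_divide: "v (x / y) = v x / v y"
  by (simp add: divide_inverse v_mult v_inverse)

lemma v_sum_le: "(\<And>i. i \<in> S \<Longrightarrow> v (f i) \<le> B) \<Longrightarrow> 0 \<le> B \<Longrightarrow> v (sum f S) \<le> B"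
proof (induction S rule: infinite_finite_induct)
  case (insert x F)
  then have "v (f x) \<le> B" "v (sum f F) \<le> B" by auto
  moreover have "v (sum f (insert x F)) \<le> max (v (f x)) (v (sum f F))"
    using insert v_add_le[of "f x" "sum f F"] by simp
  ultimately show ?case by (simp add: max_def split: if_splits)
qed auto

lemma v_sum_less: "(\<And>i. i \<in> S \<Longrightarrow> v (f i) < B) \<Longrightarrow> 0 < B \<Longrightarrow> v (sum f S) < B"
proof (induction S rule: infinite_finite_induct)
  case (insert x F)
  then have "v (f x) < B" "v (sum f F) < B" by auto
  moreover have "v (sum f (insert x F)) \<le> max (v (f x)) (v (sum f F))"
    using insert v_add_le[of "f x" "sum f F"] by simp
  ultimately show ?case by (simp add: max_def split: if_splits)
qed auto

lemma v_of_nat_le_1: "v (of_nat n) \<le> 1"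
proof (induction n)
  case (Suc n)
  then show ?case using v_add_le[of 1 "of_nat n"] by simp
qed simp

lemma v_of_int_le_1: "v (of_int i) \<le> 1"
proof (cases "i \<ge> 0")
  case True
  then show ?thesis using v_of_nat_le_1[of "nat i"] by simp
next
  case False
  then have "of_int i = - (of_nat (nat (- i)) :: 'a)" by simp
  then show ?thesis using v_of_nat_le_1[of "nat (- i)"] by simp
qed

lemma v_of_nat_mult_le: "v (of_nat m * x) \<le> v x"
  using v_of_nat_le_1[of m] by (simp add: v_mult mult_left_le_one_le)

lemma vtendsto_unique: assumes "vtendsto v f a" "vtendsto v f b" shows "a = b"
proof (rule ccontr)
  assume "a \<noteq> b"
  then have e: "v (a - b) > 0" by (simp add: v_pos_iff)
  obtain N1 where N1: "\<forall>n\<ge>N1. v (f n - a) < v (a - b)" using assms(1) e by (auto simp: vtendsto_def)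
  obtain N2 where N2: "\<forall>n\<ge>N2. v (f n - b) < v (a - b)" using assms(2) e by (auto simp: vtendsto_def)
  define n where "n = max N1 N2"
  have "v (a - b) \<le> max (v (f n - b)) (v (f n - a))"
    using v_diff_le[of "f n - b" "f n - a"] by simp
  moreover have "v (f n - a) < v (a - b)" "v (f n - b) < v (a - b)" using N1 N2 n_def by auto
  ultimately show False by simp
qed

lemma vlim_eq: "vtendsto v f L \<Longrightarrow> vlim v f = L"
  unfolding vlim_def using vtendsto_unique by blast

lemma vtendsto_const: "vtendsto v (\<lambda>n. c) c"
  by (simp add: vtendsto_def)

lemma vtendsto_cong: "vtendsto v f a \<Longrightarrow> (\<And>n. f n = g n) \<Longrightarrow> a = b \<Longrightarrow> vtendsto v g b"
  by (simp add: vtendsto_def)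

lemma vtendsto_cong_eventually:
  assumes "\<And>n. n \<ge> K \<Longrightarrow> f n = g n" "vtendsto v f L" shows "vtendsto v g L"
  unfolding vtendsto_def
proof (intro allI impI)
  fix e :: real assume "e > 0"
  then obtain N where N: "\<forall>n\<ge>N. v (f n - L) < e" using assms(2) by (auto simp: vtendsto_def)
  have "\<forall>n\<ge>max N K. v (g n - L) < e" using N assms(1) by fastforce
  then show "\<exists>N. \<forall>n\<ge>N. v (g n - L) < e" by blast
qed

lemma vtendsto_Suc_iff: "vtendsto v (\<lambda>n. f (Suc n)) L \<longleftrightarrow> vtendsto v f L"
  unfolding vtendsto_def
proof (intro iffI allI impI)
  fix e :: real assume "\<forall>e>0. \<exists>N. \<forall>n\<ge>N. v (f (Suc n) - L) < e" "e > 0"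
  then obtain N where "\<forall>n\<ge>N. v (f (Suc n) - L) < e" by blast
  then have "\<forall>n\<ge>Suc N. v (f n - L) < e" by (metis Suc_le_D Suc_le_mono)
  then show "\<exists>N. \<forall>n\<ge>N. v (f n - L) < e" by blast
next
  fix e :: real assume "\<forall>e>0. \<exists>N. \<forall>n\<ge>N. v (f n - L) < e" "e > 0"
  then obtain N where "\<forall>n\<ge>N. v (f n - L) < e" by blast
  then have "\<forall>n\<ge>N. v (f (Suc n) - L) < e" by simp
  then show "\<exists>N. \<forall>n\<ge>N. v (f (Suc n) - L) < e" by blast
qed

lemma vtendsto_add:
  assumes "vtendsto v f a" "vtendsto v g b" shows "vtendsto v (\<lambda>n. f n + g n) (a + b)"
  unfolding vtendsto_def
proof (intro allI impI)
  fix e :: real assume e: "e > 0"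
  obtain N1 where N1: "\<forall>n\<ge>N1. v (f n - a) < e" using assms(1) e by (auto simp: vtendsto_def)
  obtain N2 where N2: "\<forall>n\<ge>N2. v (g n - b) < e" using assms(2) e by (auto simp: vtendsto_def)
  have "v (f n + g n - (a + b)) < e" if "n \<ge> max N1 N2" for n
  proof -
    have "v (f n + g n - (a + b)) \<le> max (v (f n - a)) (v (g n - b))"
      using v_add_le[of "f n - a" "g n - b"] by (simp add: algebra_simps)
    moreover have "v (f n - a) < e" "v (g n - b) < e" using N1 N2 that by auto
    ultimately show ?thesis by simp
  qed
  then show "\<exists>N. \<forall>n\<ge>N. v (f n + g n - (a + b)) < e" by blast
qed

lemma vtendsto_minus: "vtendsto v f a \<Longrightarrow> vtendsto v (\<lambda>n. - f n) (- a)"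
proof -
  have "v (- x - - y) = v (x - y)" for x y
    using v_minus[of "x - y"] by (simp only: minus_diff_minus minus_diff_eq)
  then show "vtendsto v f a \<Longrightarrow> vtendsto v (\<lambda>n. - f n) (- a)" by (simp add: vtendsto_def)
qed

lemma vtendsto_diff:
  "vtendsto v f a \<Longrightarrow> vtendsto v g b \<Longrightarrow> vtendsto v (\<lambda>n. f n - g n) (a - b)"
  using vtendsto_add[OF _ vtendsto_minus] by simp

lemma vtendsto_mult:
  assumes f: "vtendsto v f a" and g: "vtendsto v g b" shows "vtendsto v (\<lambda>n. f n * g n) (a * b)"
  unfolding vtendsto_def
proof (intro allI impI)
  fix e :: real assume e: "e > 0"
  define d1 where "d1 = min 1 (e / (1 + v b))"
  define d2 where "d2 = e / (1 + 1 + v a)"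
  have d: "d1 > 0" "d2 > 0" using e by (simp_all add: d1_def d2_def add_pos_nonneg)
  obtain N1 where N1: "\<forall>n\<ge>N1. v (f n - a) < d1" using f d by (auto simp: vtendsto_def)
  obtain N2 where N2: "\<forall>n\<ge>N2. v (g n - b) < d2" using g d by (auto simp: vtendsto_def)
  have "v (f n * g n - a * b) < e" if n: "n \<ge> max N1 N2" for n
  proof -
    have h1: "v (f n - a) < d1" and h2: "v (g n - b) < d2" using N1 N2 n by auto
    have "v (f n) \<le> max (v (f n - a)) (v a)" using v_add_le[of "f n - a" a] by simp
    moreover have "v (f n - a) < 1" using h1 by (simp add: d1_def)
    ultimately have "v (f n) < 1 + v a" using v_nonneg[of a] by linarith
    then have "v (f n * (g n - b)) \<le> (1 + v a) * d2"
      using h2 by (simp add: v_mult mult_mono less_imp_le)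
    also have "\<dots> = e * ((1 + v a) / (1 + 1 + v a))" by (simp add: d2_def)
    also have "\<dots> < e * 1"
    proof -
      have "0 < 1 + 1 + v a" using v_nonneg[of a] by linarith
      then show ?thesis using e by (intro mult_strict_left_mono) (simp_all add: divide_less_eq)
    qed
    finally have A: "v (f n * (g n - b)) < e" by simp
    have "v ((f n - a) * b) \<le> e / (1 + v b) * v b"
      using h1 d1_def by (simp only: v_mult, intro mult_right_mono) auto
    also have "\<dots> < e" using e by (simp add: field_simps add_pos_nonneg)
    finally have B: "v ((f n - a) * b) < e" .
    have "f n * g n - a * b = f n * (g n - b) + (f n - a) * b" by (simp add: algebra_simps)
    then show ?thesis using A B v_add_le[of "f n * (g n - b)" "(f n - a) * b"] by simp
  qed
  then show "\<exists>N. \<forall>n\<ge>N. v (f n * g n - a * b) < e" by blast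
qed

lemma vtendsto_cmult: "vtendsto v f a \<Longrightarrow> vtendsto v (\<lambda>n. c * f n) (c * a)"
  by (rule vtendsto_mult[OF vtendsto_const])

lemma vtendsto_power: "vtendsto v f a \<Longrightarrow> vtendsto v (\<lambda>n. f n ^ k) (a ^ k)"
proof (induction k)
  case 0 then show ?case by (simp add: vtendsto_const)
next
  case (Suc k) then show ?case unfolding power_Suc by (intro vtendsto_mult)
qed

lemma vtendsto_sum:
  "finite S \<Longrightarrow> (\<And>k. k \<in> S \<Longrightarrow> vtendsto v (f k) (L k)) \<Longrightarrow>
    vtendsto v (\<lambda>n. \<Sum>k\<in>S. f k n) (\<Sum>k\<in>S. L k)"
proof (induction S rule: finite_induct)
  case empty
  then show ?case by (simp add: vtendsto_const)
next
  case (insert x F)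
  show ?case unfolding sum.insert[OF insert.hyps] by (rule vtendsto_add) (use insert in auto)
qed

lemma vtendsto_real_bound:
  assumes "\<And>n. n \<ge> K \<Longrightarrow> v (f n - L) \<le> g n" and "g \<longlonglongrightarrow> 0"
  shows "vtendsto v f L"
  unfolding vtendsto_def
proof (intro allI impI)
  fix e :: real assume e: "e > 0"
  obtain N where "\<forall>n\<ge>N. g n < e"
    using order_tendstoD(2)[OF assms(2) e] by (auto simp: eventually_sequentially)
  then have "\<forall>n\<ge>max N K. v (f n - L) < e" using assms(1) by (metis max.bounded_iff order_le_less_trans)
  then show "\<exists>N. \<forall>n\<ge>N. v (f n - L) < e" by blast
qed

lemma vtendsto_zero_geometric:
  assumes "\<And>n. v (f n) \<le> C * r ^ n" "0 \<le> r" "r < 1"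
  shows "vtendsto v f 0"
proof (rule vtendsto_real_bound[of 0])
  show "(\<lambda>n. C * r ^ n) \<longlonglongrightarrow> 0"
    using assms by (intro tendsto_mult_right_zero LIMSEQ_power_zero) auto
qed (use assms in simp)

lemma vtendsto_v_le:
  assumes "vtendsto v f s" "\<And>n. n \<ge> K \<Longrightarrow> v (f n) \<le> B" shows "v s \<le> B"
proof (rule ccontr)
  assume c: "\<not> v s \<le> B"
  then have "v s > 0" using assms(2)[of K] v_nonneg[of "f K"] by linarith
  then obtain N where N: "\<forall>n\<ge>N. v (f n - s) < v s" using assms(1) by (auto simp: vtendsto_def)
  define n where "n = max N K"
  have "v s \<le> max (v (f n)) (v (f n - s))" using v_diff_le[of "f n" "f n - s"] by simp
  moreover have "v (f n) \<le> B" "v (f n - s) < v s" using assms(2) N n_def by auto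
  ultimately show False using c by simp
qed

lemma vtendsto_zero_imp_bounded: assumes "vtendsto v a 0" shows "\<exists>M>0. \<forall>i. v (a i) \<le> M"
proof -
  obtain N where N: "\<forall>n\<ge>N. v (a n) < 1" using assms by (force simp: vtendsto_def)
  define M where "M = 1 + (\<Sum>i<N. v (a i))"
  have "v (a i) \<le> M" for i
  proof (cases "i < N")
    case True
    then have "v (a i) \<le> (\<Sum>i<N. v (a i))" by (intro member_le_sum) auto
    then show ?thesis by (simp add: M_def)
  next
    case False
    then have "v (a i) < 1" using N by simp
    then show ?thesis using sum_nonneg[of "{..<N}" "\<lambda>i. v (a i)"] by (simp add: M_def)
  qed
  moreover have "M > 0" using sum_nonneg[of "{..<N}" "\<lambda>i. v (a i)"] by (simp add: M_def)
  ultimately show ?thesis by blast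
qed

definition vsums :: "(nat \<Rightarrow> 'a) \<Rightarrow> 'a \<Rightarrow> bool" where
  "vsums f s \<longleftrightarrow> vtendsto v (\<lambda>N. \<Sum>n<N. f n) s"

lemma vsuminf_eq: "vsums f s \<Longrightarrow> vsuminf v f = s"
  unfolding vsums_def vsuminf_def by (rule vlim_eq)

lemma vsums_unique: "vsums f s \<Longrightarrow> vsums f t \<Longrightarrow> s = t"
  unfolding vsums_def by (rule vtendsto_unique)

lemma vsums_v_le: assumes "vsums f s" "\<And>n. v (f n) \<le> B" shows "v s \<le> B"
proof -
  have "0 \<le> B" using assms(2)[of 0] v_nonneg[of "f 0"] by linarith
  then have "v (\<Sum>n<N. f n) \<le> B" for N using assms(2) by (intro v_sum_le)
  then show ?thesis using vtendsto_v_le[OF assms(1)[unfolded vsums_def]] by blast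
qed

lemma vsums_diff: "vsums f s \<Longrightarrow> vsums g t \<Longrightarrow> vsums (\<lambda>n. f n - g n) (s - t)"
  unfolding vsums_def sum_subtractf by (rule vtendsto_diff)

lemma vsums_divide: "vsums f s \<Longrightarrow> vsums (\<lambda>n. f n / c) (s / c)"
  unfolding vsums_def divide_inverse sum_distrib_right[symmetric] by (rule vtendsto_mult[OF _ vtendsto_const])

lemma vsums_sum:
  "finite S \<Longrightarrow> (\<And>k. k \<in> S \<Longrightarrow> vsums (f k) (s k)) \<Longrightarrow> vsums (\<lambda>n. \<Sum>k\<in>S. f k n) (\<Sum>k\<in>S. s k)"
  unfolding vsums_def by (subst sum.swap) (rule vtendsto_sum)

lemma vsums_Suc_iff: "vsums (\<lambda>n. f (Suc n)) s \<longleftrightarrow> vsums f (s + f 0)"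
proof -
  have "vsums f (s + f 0) \<longleftrightarrow> vtendsto v (\<lambda>N. \<Sum>n<Suc N. f n) (s + f 0)"
    unfolding vsums_def by (rule vtendsto_Suc_iff[symmetric])
  also have "\<dots> \<longleftrightarrow> vtendsto v (\<lambda>N. (\<Sum>n<N. f (Suc n)) + f 0) (s + f 0)"
    by (simp only: sum.lessThan_Suc_shift add.commute)
  also have "\<dots> \<longleftrightarrow> vtendsto v (\<lambda>N. \<Sum>n<N. f (Suc n)) s"
    unfolding vtendsto_def by (simp add: algebra_simps)
  finally show ?thesis unfolding vsums_def by simp
qed

lemma vsums_finite: assumes "\<And>n. n \<ge> K \<Longrightarrow> f n = 0" shows "vsums f (\<Sum>n<K. f n)"
  unfolding vsums_def
proof (rule vtendsto_cong_eventually[of K])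
  show "(\<Sum>n<K. f n) = (\<Sum>n<N. f n)" if "K \<le> N" for N
  proof -
    have "(\<Sum>n<N. f n) = (\<Sum>n<K. f n) + (\<Sum>n\<in>{K..<N}. f n)"
      using that by (simp add: lessThan_atLeast0 sum.atLeastLessThan_concat)
    then show ?thesis using assms by simp
  qed
qed (rule vtendsto_const)

lemma vtendsto_product_off_triangle:
  assumes a0: "vtendsto v a 0" and b0: "vtendsto v b 0"
  shows "vtendsto v (\<lambda>N. \<Sum>(i, j)\<in>{..<N} \<times> {..<N} - {(i, j). i + j < N}. a i * b j) 0"
  unfolding vtendsto_def
proof (intro allI impI)
  fix e :: real assume e: "e > 0"
  obtain Ma where Ma: "Ma > 0" "\<And>i. v (a i) \<le> Ma" using vtendsto_zero_imp_bounded[OF a0] by blast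
  obtain Mb where Mb: "Mb > 0" "\<And>i. v (b i) \<le> Mb" using vtendsto_zero_imp_bounded[OF b0] by blast
  obtain K1 where K1: "\<forall>n\<ge>K1. v (a n) < e / Mb" using a0 e Mb by (force simp: vtendsto_def)
  obtain K2 where K2: "\<forall>n\<ge>K2. v (b n) < e / Ma" using b0 e Ma by (force simp: vtendsto_def)
  have "v ((\<Sum>(i, j)\<in>{..<N} \<times> {..<N} - {(i, j). i + j < N}. a i * b j) - 0) < e"
    if N: "N \<ge> K1 + K2" for N
  proof -
    have "v (\<Sum>(i, j)\<in>{..<N} \<times> {..<N} - {(i, j). i + j < N}. a i * b j) < e"
    proof (rule v_sum_less)
      fix x assume "x \<in> {..<N} \<times> {..<N} - {(i, j). i + j < N}"
      then obtain i j where x: "x = (i, j)" and "N \<le> i + j" by auto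
      then have "i \<ge> K1 \<or> j \<ge> K2" using N by linarith
      then have "v (a i) * v (b j) < e"
      proof
        assume "i \<ge> K1"
        have "v (a i) * v (b j) \<le> v (a i) * Mb" using Mb by (intro mult_left_mono) auto
        also have "\<dots> < e" using K1 \<open>i \<ge> K1\<close> Mb by (simp add: less_divide_eq)
        finally show ?thesis .
      next
        assume "j \<ge> K2"
        have "v (a i) * v (b j) \<le> Ma * v (b j)" using Ma by (intro mult_right_mono) auto
        also have "\<dots> < e" using K2 \<open>j \<ge> K2\<close> Ma by (simp add: less_divide_eq mult.commute)
        finally show ?thesis .
      qed
      then show "v (case x of (i, j) \<Rightarrow> a i * b j) < e" by (simp add: x v_mult)
    qed (rule e)
    then show ?thesis by simp
  qed
  then show "\<exists>N. \<forall>n\<ge>N. v ((\<Sum>(i, j)\<in>{..<n} \<times> {..<n} - {(i, j). i + j < n}. a i * b j) - 0) < e"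
    by blast
qed

text \<open>No absolute convergence is needed: in the ultrametric case terms tending to 0 suffice.\<close>

lemma vsums_cauchy_product:
  assumes "vtendsto v a 0" "vtendsto v b 0" "vsums a A" "vsums b B"
  shows "vsums (\<lambda>k. \<Sum>i\<le>k. a i * b (k - i)) (A * B)"
proof -
  define g where "g = (\<lambda>(i, j). a i * b j)"
  define square where "square N = {..<N} \<times> {..<N}" for N :: nat
  define triangle where "triangle N = {(i, j). i + j < N}" for N :: nat
  have "(\<Sum>i<N. a i) * (\<Sum>j<N. b j) = sum g (square N)" for N
    unfolding square_def g_def by (simp add: sum_product sum.cartesian_product)
  then have "vtendsto v (\<lambda>N. sum g (square N)) (A * B)"
    using vtendsto_mult[OF assms(3,4)[unfolded vsums_def]] by simp
  from vtendsto_diff[OF this vtendsto_product_off_triangle[OF assms(1,2)]]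
  have "vtendsto v (\<lambda>N. sum g (square N) - sum g (square N - triangle N)) (A * B)"
    by (simp add: g_def square_def triangle_def)
  moreover have "sum g (square N) - sum g (square N - triangle N) = (\<Sum>k<N. \<Sum>i\<le>k. a i * b (k - i))" for N
  proof -
    have "triangle N \<subseteq> square N" by (auto simp: square_def triangle_def)
    then have "sum g (square N) - sum g (square N - triangle N) = sum g (triangle N)"
      by (simp add: sum_diff square_def)
    then show ?thesis
      unfolding triangle_def g_def using sum.triangle_reindex[of "\<lambda>i j. a i * b j" N] by simp
  qed
  ultimately show ?thesis unfolding vsums_def by simp
qed

end

locale complete_nonarch_field = nonarch_field +
  assumes complete: "vcauchy v f \<Longrightarrow> vconverges v f"
begin

lemma vsums_exists: assumes "vtendsto v f 0" shows "\<exists>s. vsums f s"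
proof -
  have "vcauchy v (\<lambda>N. \<Sum>n<N. f n)"
    unfolding vcauchy_def
  proof (intro allI impI)
    fix e :: real assume e: "e > 0"
    obtain N where N: "\<forall>n\<ge>N. v (f n) < e" using assms e by (force simp: vtendsto_def)
    have tail: "v ((\<Sum>n<m. f n) - (\<Sum>n<k. f n)) < e" if "N \<le> k" "k \<le> m" for m k
    proof -
      have "(\<Sum>n<m. f n) - (\<Sum>n<k. f n) = (\<Sum>n\<in>{k..<m}. f n)"
        using that by (simp add: lessThan_atLeast0 sum_diff_nat_ivl)
      also have "v \<dots> < e" using N that e by (intro v_sum_less) auto
      finally show ?thesis .
    qed
    have "v ((\<Sum>n<m. f n) - (\<Sum>n<k. f n)) < e" if "m \<ge> N" "k \<ge> N" for m k
      using tail[of k m] tail[of m k] that v_minus_commute by (cases "k \<le> m") auto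
    then show "\<exists>N. \<forall>m\<ge>N. \<forall>k\<ge>N. v ((\<Sum>n<m. f n) - (\<Sum>n<k. f n)) < e" by blast
  qed
  then show ?thesis using complete unfolding vconverges_def vsums_def by blast
qed

end

section \<open>Complete fields with the \<open>p\<close>-adic normalisation\<close>

locale padic_field = complete_nonarch_field v for v :: "'a::field_char_0 \<Rightarrow> real" +
  fixes p :: nat
  assumes prime: "prime p" and v_p: "v (of_nat p) = 1 / real p"
begin

lemma p_ge_2: "p \<ge> 2"
  using prime by (simp add: prime_ge_2_nat)

lemma v_of_nat_coprime: assumes "\<not> p dvd m" shows "v (of_nat m) = 1"
proof -
  have "coprime p m" using assms prime by (simp add: prime_imp_coprime)
  then have "coprime (int m) (int p)" by (simp add: coprime_commute)
  then obtain a b where "a * int m + b * int p = 1"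
    by (metis bezout_int gcd.commute coprime_iff_gcd_eq_1)
  then have "(of_int a * of_nat m + of_int b * of_nat p :: 'a) = 1"
    by (metis of_int_1 of_int_add of_int_mult of_int_of_nat_eq)
  then have "1 \<le> max (v (of_int a * of_nat m)) (v (of_int b * of_nat p))"
    using v_add_le by (metis v_one)
  moreover have "v (of_int a * of_nat m) \<le> v (of_nat m)"
    using v_of_int_le_1[of a] by (simp add: v_mult mult_left_le_one_le)
  moreover have "v (of_int b * of_nat p) \<le> 1 / real p"
    using v_of_int_le_1[of b] p_ge_2 by (simp add: v_mult v_p divide_right_mono)
  moreover have "1 / real p < 1" using p_ge_2 by simp
  ultimately show ?thesis using v_of_nat_le_1[of m] by linarith
qed

lemma v_of_nat_p_power: "v (of_nat (p ^ N)) = (1 / real p) ^ N"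
  by (simp only: of_nat_power v_power v_p)

lemma vtendsto_of_nat_p_power: "vtendsto v (\<lambda>N. of_nat (p ^ N)) 0"
proof (rule vtendsto_real_bound[of 0])
  show "(\<lambda>N. (1 / real p) ^ N) \<longlonglongrightarrow> 0" using p_ge_2 by (intro LIMSEQ_power_zero) auto
qed (simp add: v_power v_p)

lemma v_fact_div: "v (fact n) = (1 / real p) ^ (n div p) * v (fact (n div p))"
proof (induction n)
  case (Suc n)
  show ?case
  proof (cases "p dvd Suc n")
    case False
    then have "Suc n div p = n div p" by (simp add: div_Suc dvd_eq_mod_eq_0)
    then show ?thesis using Suc False by (simp add: v_mult v_of_nat_coprime del: of_nat_Suc)
  next
    case True
    define m where "m = n div p"
    have m: "Suc n div p = Suc m" using True by (simp add: m_def div_Suc dvd_eq_mod_eq_0)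
    then have "of_nat (Suc n) = (of_nat p * of_nat (Suc m) :: 'a)"
      using True by (metis dvd_mult_div_cancel of_nat_mult)
    then have "v (fact (Suc n)) = 1 / real p * v (of_nat (Suc m)) * v (fact n)"
      by (simp only: fact_Suc v_mult v_p)
    also have "v (fact n) = (1 / real p) ^ m * v (fact m)"
      using Suc by (simp add: m_def)
    finally show ?thesis by (simp add: m v_mult mult_ac del: of_nat_Suc)
  qed
qed simp

definition rho :: real where
  "rho = real p powr (- 1 / (real p - 1))"

lemma rho_pos: "rho > 0"
  using p_ge_2 by (simp add: rho_def)

lemma rho_power: "rho ^ (p - 1) = 1 / real p"
proof -
  have "rho ^ (p - 1) = real p powr (real (p - 1) * (- 1 / (real p - 1)))"
    unfolding rho_def using p_ge_2 by (intro powr_power) simp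
  also have "real (p - 1) * (- 1 / (real p - 1)) = -1"
    using p_ge_2 by (simp add: of_nat_diff)
  finally show ?thesis using p_ge_2 by (simp add: powr_minus divide_inverse)
qed

lemma rho_le_1: "rho \<le> 1"
proof -
  have "1 \<le> real p powr (1 / (real p - 1))" using p_ge_2 by (intro ge_one_powr_ge_zero) auto
  then show ?thesis by (simp add: rho_def powr_minus_divide divide_le_eq)
qed

text \<open>Equivalently \<open>ord\<^sub>p (n!) \<le> (n - 1) / (p - 1)\<close>; this makes \<open>rho\<close> the radius of
  convergence of the exponential.\<close>

lemma v_fact_ge: "rho ^ (n - 1) \<le> v (fact n)"
proof (induction n rule: less_induct)
  case (less n)
  define m where "m = n div p"
  have rec: "v (fact n) = (1 / real p) ^ m * v (fact m)"
    unfolding m_def by (rule v_fact_div)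
  show ?case
  proof (cases "m = 0")
    case True
    then show ?thesis using rec rho_le_1 rho_pos by (simp add: power_le_one)
  next
    case False
    then have "n > 0" by (cases n) (auto simp: m_def)
    then have "m < n" unfolding m_def using p_ge_2 by (intro div_less_dividend) auto
    then have "(1 / real p) ^ m * rho ^ (m - 1) \<le> v (fact n)"
      using less rec by (simp add: mult_left_mono)
    moreover have "(1 / real p) ^ m * rho ^ (m - 1) = rho ^ (p * m - 1)"
    proof -
      have "(p - 1) * m + (m - 1) = p * m - 1" using False p_ge_2 by (simp add: algebra_simps)
      then show ?thesis by (metis rho_power power_add power_mult)
    qed
    moreover have "rho ^ (n - 1) \<le> rho ^ (p * m - 1)"
      using rho_pos rho_le_1 by (intro power_decreasing diff_le_mono) (auto simp: m_def)
    ultimately show ?thesis by linarith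
  qed
qed

lemma v_of_nat_ge: assumes "n \<ge> 1" shows "rho ^ (n - 1) \<le> v (of_nat n)"
proof -
  obtain k where k: "n = Suc k" using assms by (cases n) auto
  have "v (fact n) = v (of_nat n) * v (fact k)"
    by (simp only: k fact_Suc v_mult)
  also have "\<dots> \<le> v (of_nat n)"
    using v_of_nat_le_1[of "fact k"] by (simp add: mult_left_le)
  finally show ?thesis using v_fact_ge[of n] by simp
qed

section \<open>The \<open>p\<close>-adic exponential\<close>

lemma pexp_term_le: assumes "n \<ge> 1" shows "v (y ^ n / fact n) \<le> rho * (v y / rho) ^ n"
proof -
  have "v (y ^ n / fact n) = v y ^ n / v (fact n)" by (simp add: v_divide v_power)
  also have "\<dots> \<le> v y ^ n / rho ^ (n - 1)"
    using v_fact_ge[of n] zero_less_power[OF rho_pos, of "n - 1"]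
    by (intro divide_left_mono) (auto intro: mult_pos_pos)
  also have "\<dots> = rho * (v y / rho) ^ n"
    using assms rho_pos by (cases n) (auto simp: power_divide field_simps)
  finally show ?thesis .
qed

lemma vtendsto_pexp_terms: assumes "v y < rho" shows "vtendsto v (\<lambda>n. y ^ n / fact n) 0"
proof (rule vtendsto_zero_geometric)
  show "v (y ^ n / fact n) \<le> 1 * (v y / rho) ^ n" for n
  proof (cases "n = 0")
    case False
    then have "v (y ^ n / fact n) \<le> rho * (v y / rho) ^ n" using pexp_term_le by simp
    also have "\<dots> \<le> 1 * (v y / rho) ^ n"
      using rho_le_1 rho_pos by (intro mult_right_mono) auto
    finally show ?thesis .
  qed simp
qed (use assms rho_pos in auto)

lemma pexp_sums: assumes "v y < rho" shows "vsums (\<lambda>n. y ^ n / fact n) (pexp v y)"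
proof -
  obtain s where s: "vsums (\<lambda>n. y ^ n / fact n) s"
    using vsums_exists[OF vtendsto_pexp_terms[OF assms]] by blast
  then show ?thesis unfolding pexp_def by (simp add: vsuminf_eq)
qed

lemma pexp_0: "pexp v 0 = 1"
proof -
  have "vsums (\<lambda>n. (0::'a) ^ n / fact n) (\<Sum>n<1. 0 ^ n / fact n)"
    by (rule vsums_finite) simp
  then show ?thesis using pexp_sums[of 0] rho_pos vsums_unique by fastforce
qed

lemma pexp_add: assumes "v a < rho" "v b < rho" shows "pexp v (a + b) = pexp v a * pexp v b"
proof -
  have "(\<Sum>i\<le>k. a ^ i / fact i * (b ^ (k - i) / fact (k - i))) = (a + b) ^ k / fact k" for k
  proof -
    have "(a + b) ^ k / fact k = (\<Sum>i\<le>k. of_nat (k choose i) * a ^ i * b ^ (k - i) / fact k)"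
      by (simp add: binomial_ring sum_divide_distrib)
    also have "\<dots> = (\<Sum>i\<le>k. a ^ i / fact i * (b ^ (k - i) / fact (k - i)))"
      by (intro sum.cong refl) (simp add: binomial_fact field_simps)
    finally show ?thesis by simp
  qed
  then have "vsums (\<lambda>k. (a + b) ^ k / fact k) (pexp v a * pexp v b)"
    using vsums_cauchy_product[OF vtendsto_pexp_terms[OF assms(1)] vtendsto_pexp_terms[OF assms(2)]
        pexp_sums[OF assms(1)] pexp_sums[OF assms(2)]] by simp
  moreover have "v (a + b) < rho" using v_add_le[of a b] assms by simp
  ultimately show ?thesis using pexp_sums vsums_unique by blast
qed

lemma pexp_of_nat_mult: assumes "v y < rho" shows "pexp v (of_nat n * y) = pexp v y ^ n"
proof (induction n)
  case (Suc n)
  have "v (of_nat n * y) < rho" using v_of_nat_mult_le[of n y] assms by simp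
  then have "pexp v (of_nat n * y + y) = pexp v (of_nat n * y) * pexp v y"
    using assms by (rule pexp_add)
  then show ?case using Suc by (simp add: algebra_simps)
qed (simp add: pexp_0)

lemma pexp_remainder_le: assumes "v y < rho" shows "v (pexp v y - 1 - y) \<le> v y ^ 2 / rho"
proof -
  define f where "f = (\<lambda>n. y ^ n / fact n)"
  have "vsums f (pexp v y - 1 + f 0)"
    using pexp_sums[OF assms] by (simp add: f_def)
  then have "vsums (\<lambda>n. f (Suc n)) (pexp v y - 1 - y + f (Suc 0))"
    by (simp only: vsums_Suc_iff[symmetric]) (simp add: f_def)
  then have "vsums (\<lambda>n. f (Suc (Suc n))) (pexp v y - 1 - y)"
    by (simp only: vsums_Suc_iff[of "\<lambda>n. f (Suc n)", symmetric])
  moreover have "v (f (Suc (Suc n))) \<le> v y ^ 2 / rho" for n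
  proof -
    have "v (f (Suc (Suc n))) \<le> rho * (v y / rho) ^ Suc (Suc n)"
      unfolding f_def by (rule pexp_term_le) simp
    also have "\<dots> = v y ^ 2 / rho * (v y / rho) ^ n"
      using rho_pos by (simp add: power_divide field_simps power2_eq_square)
    also have "\<dots> \<le> v y ^ 2 / rho * 1"
      using assms rho_pos by (intro mult_left_mono power_le_one) auto
    finally show ?thesis by simp
  qed
  ultimately show ?thesis by (rule vsums_v_le)
qed

lemma pexp_eq_1_imp_zero: assumes "v y < rho" "pexp v y = 1" shows "y = 0"
proof (rule ccontr)
  assume "y \<noteq> 0"
  then have "v y > 0" by (simp add: v_pos_iff)
  moreover have "v y \<le> v y ^ 2 / rho" using pexp_remainder_le[OF assms(1)] assms(2) by simp
  ultimately have "rho \<le> v y" using rho_pos by (simp add: field_simps power2_eq_square)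
  then show False using assms(1) by simp
qed

lemma pexp_difference_quotient_le:
  assumes "v y < rho" "m \<noteq> 0"
  shows "v ((pexp v (of_nat m * y) - 1) / of_nat m - y) \<le> v (of_nat m) * rho"
proof -
  define z where "z = of_nat m * y"
  have vm: "v (of_nat m) > 0" using assms(2) by (simp add: v_pos_iff)
  have "(pexp v z - 1) / of_nat m - y = (pexp v z - 1 - z) / of_nat m"
    using assms(2) by (simp add: z_def field_simps)
  then have "v ((pexp v z - 1) / of_nat m - y) = v (pexp v z - 1 - z) / v (of_nat m)"
    by (simp add: v_divide)
  also have "\<dots> \<le> (v z ^ 2 / rho) / v (of_nat m)"
    using pexp_remainder_le[of z] v_of_nat_mult_le[of m y] assms(1) vm
    by (intro divide_right_mono) (auto simp: z_def)
  also have "\<dots> = v (of_nat m) * (v y * v y / rho)"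
    using vm rho_pos by (simp add: z_def v_mult power2_eq_square field_simps)
  also have "\<dots> \<le> v (of_nat m) * rho"
    using assms(1) rho_pos
    by (intro mult_left_mono) (simp_all add: divide_le_eq mult_mono less_imp_le)
  finally show ?thesis by (simp add: z_def)
qed

lemma vtendsto_pexp_difference_quotient:
  assumes "v y < rho"
  shows "vtendsto v (\<lambda>N. (pexp v y ^ p ^ N - 1) / of_nat (p ^ N)) y"
proof (rule vtendsto_real_bound[of 0])
  fix N :: nat
  have "pexp v y ^ p ^ N = pexp v (of_nat (p ^ N) * y)"
    by (rule pexp_of_nat_mult[OF assms, symmetric])
  then have "v ((pexp v y ^ p ^ N - 1) / of_nat (p ^ N) - y) \<le> v (of_nat (p ^ N)) * rho"
    using pexp_difference_quotient_le[OF assms, of "p ^ N"] p_ge_2 by simp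
  also have "\<dots> \<le> (1 / real p) ^ N"
    using rho_le_1 by (simp add: v_of_nat_p_power mult_left_le del: of_nat_power)
  finally show "v ((pexp v y ^ p ^ N - 1) / of_nat (p ^ N) - y) \<le> (1 / real p) ^ N" .
qed (use p_ge_2 in \<open>auto intro: LIMSEQ_power_zero\<close>)

lemma vtendsto_volkenborn_sums_pexp_power:
  assumes "v y < rho" "y \<noteq> 0"
  shows "vtendsto v (volkenborn_sums p (\<lambda>x. pexp v y ^ x)) (y / (pexp v y - 1))"
proof -
  have w: "pexp v y - 1 \<noteq> 0" using pexp_eq_1_imp_zero assms by auto
  have "(pexp v y ^ p ^ N - 1) / of_nat (p ^ N) * inverse (pexp v y - 1)
      = volkenborn_sums p (\<lambda>x. pexp v y ^ x) N" for N
    using w p_ge_2 by (simp add: volkenborn_sums_def sum_gp_strict field_simps)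
  with vtendsto_mult[OF vtendsto_pexp_difference_quotient[OF assms(1)] vtendsto_const]
  show ?thesis by (rule vtendsto_cong) (simp add: divide_inverse)
qed

end

section \<open>The \<open>p\<close>-adic logarithm and \<open>exp (log q) = q\<close>\<close>

lemma fps_exp_compose_ln: "fps_exp (1::'a::field_char_0) oo fps_ln 1 = 1 + fps_X"
proof -
  have "fps_ln (1::'a) = fps_inv (fps_exp 1 - 1)"
    by (rule fps_ln_fps_exp_inv) simp
  then have "(fps_exp (1::'a) - 1) oo fps_ln 1 = fps_X"
    using fps_inv_fps_exp_compose(2)[of "1::'a"] by (simp only:) simp
  then show ?thesis by (simp add: fps_compose_sub_distrib algebra_simps)
qed

lemma fps_exp_compose_ln_nth:
  "(\<Sum>n=0..k. fps_nth (fps_ln (1::'a::field_char_0) ^ n) k / fact n) = (if k \<le> 1 then 1 else 0)"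
proof -
  have "(\<Sum>n=0..k. fps_nth (fps_ln (1::'a) ^ n) k / fact n) = fps_nth (fps_exp 1 oo fps_ln 1) k"
    by (simp add: fps_compose_nth)
  also have "\<dots> = (if k \<le> 1 then 1 else 0)"
    by (simp add: fps_exp_compose_ln fps_X_nth)
  finally show ?thesis .
qed

locale padic_log = padic_field +
  fixes q :: 'a
  assumes close_to_1: "v (1 - q) < rho"
begin

definition log_power_term :: "nat \<Rightarrow> nat \<Rightarrow> 'a" where
  "log_power_term n k = fps_nth (fps_ln 1 ^ n) k * (q - 1) ^ k"

definition ratio :: real where
  "ratio = v (q - 1) / rho"

lemma ratio_nonneg: "0 \<le> ratio"
  using rho_pos by (simp add: ratio_def)

lemma ratio_less_1: "ratio < 1"
  using close_to_1 rho_pos by (simp add: ratio_def v_minus_commute)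

lemma log_term_le: "v (log_power_term 1 k) \<le> rho * ratio ^ k"
proof (cases "k = 0")
  case False
  have "v (log_power_term 1 k) = v (q - 1) ^ k / v (of_nat k)"
    using False by (simp add: log_power_term_def fps_ln_nth v_mult v_divide v_power)
  also have "\<dots> \<le> v (q - 1) ^ k / rho ^ (k - 1)"
    using v_of_nat_ge[of k] False zero_less_power[OF rho_pos, of "k - 1"]
    by (intro divide_left_mono) (auto intro: mult_pos_pos)
  also have "\<dots> = rho * ratio ^ k"
    using False rho_pos by (cases k) (auto simp: ratio_def power_divide field_simps)
  finally show ?thesis .
qed (simp add: log_power_term_def less_imp_le[OF rho_pos] ratio_nonneg)

lemma log_term_le_dist: "v (log_power_term 1 k) \<le> v (q - 1)"
proof (cases "k = 0")
  case False
  have "rho * ratio ^ k \<le> rho * ratio ^ 1"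
    using False ratio_nonneg ratio_less_1 rho_pos by (intro mult_left_mono power_decreasing) auto
  then show ?thesis using log_term_le[of k] rho_pos by (simp add: ratio_def)
qed (simp add: log_power_term_def)

lemma vtendsto_log_terms: "vtendsto v (log_power_term 1) 0"
  by (rule vtendsto_zero_geometric[of _ rho ratio]) (use log_term_le ratio_nonneg ratio_less_1 in auto)

lemma plog_sums: "vsums (log_power_term 1) (plog v q)"
proof -
  obtain s where s: "vsums (log_power_term 1) s" using vsums_exists[OF vtendsto_log_terms] by blast
  have "(\<lambda>n. (-1) ^ n * (q - 1) ^ (n + 1) / of_nat (n + 1)) = (\<lambda>n. log_power_term 1 (Suc n))"
    by (auto simp: log_power_term_def fps_ln_nth)
  moreover have "vsums (\<lambda>n. log_power_term 1 (Suc n)) s"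
    using s vsums_Suc_iff[of "log_power_term 1" s] by (simp add: log_power_term_def)
  ultimately show ?thesis using s by (simp add: plog_def vsuminf_eq)
qed

lemma v_plog_le: "v (plog v q) \<le> v (q - 1)"
  using plog_sums log_term_le_dist by (rule vsums_v_le)

lemma v_plog_less: "v (plog v q) < rho"
  using v_plog_le close_to_1 by (simp add: v_minus_commute)

lemma log_power_term_Suc:
  "log_power_term (Suc n) k = (\<Sum>i\<le>k. log_power_term n i * log_power_term 1 (k - i))"
proof -
  have "log_power_term (Suc n) k = (\<Sum>i\<le>k. fps_nth (fps_ln 1 ^ n) i * fps_nth (fps_ln 1) (k - i) * (q - 1) ^ k)"
    by (simp only: log_power_term_def power_Suc2 fps_mult_nth atLeast0AtMost sum_distrib_right)
  also have "\<dots> = (\<Sum>i\<le>k. log_power_term n i * log_power_term 1 (k - i))"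
  proof (intro sum.cong refl)
    fix i assume "i \<in> {..k}"
    then have "(q - 1) ^ k = (q - 1) ^ i * (q - 1) ^ (k - i)" by (simp flip: power_add)
    then show "fps_nth (fps_ln 1 ^ n) i * fps_nth (fps_ln 1) (k - i) * (q - 1) ^ k
        = log_power_term n i * log_power_term 1 (k - i)"
      by (simp add: log_power_term_def)
  qed
  finally show ?thesis .
qed

lemma log_power_term_eq_0: "k < n \<Longrightarrow> log_power_term n k = 0"
  using startsby_zero_power_prefix[of "fps_ln (1::'a)" n] by (simp add: log_power_term_def)

lemma log_power_term_le_ratio: "v (log_power_term n k) \<le> ratio ^ k"
proof (induction n arbitrary: k)
  case 0
  then show ?case by (simp add: log_power_term_def ratio_nonneg)
next
  case (Suc n)
  show ?case unfolding log_power_term_Suc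
  proof (rule v_sum_le)
    fix i assume "i \<in> {..k}"
    then have "ratio ^ i * ratio ^ (k - i) = ratio ^ k" by (simp flip: power_add)
    moreover have "v (log_power_term n i) * v (log_power_term 1 (k - i)) \<le> ratio ^ i * (rho * ratio ^ (k - i))"
      using Suc log_term_le ratio_nonneg by (intro mult_mono) auto
    moreover have "ratio ^ i * (rho * ratio ^ (k - i)) \<le> ratio ^ i * ratio ^ (k - i)"
      using rho_pos rho_le_1 ratio_nonneg by (intro mult_left_mono mult_left_le_one_le) auto
    ultimately show "v (log_power_term n i * log_power_term 1 (k - i)) \<le> ratio ^ k"
      by (simp add: v_mult)
  qed (simp add: ratio_nonneg)
qed

lemma log_power_term_le: "v (log_power_term n k) \<le> v (q - 1) ^ n"
proof (induction n arbitrary: k)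
  case 0
  then show ?case by (simp add: log_power_term_def)
next
  case (Suc n)
  show ?case unfolding log_power_term_Suc
  proof (rule v_sum_le)
    fix i
    have "v (log_power_term n i) * v (log_power_term 1 (k - i)) \<le> v (q - 1) ^ n * v (q - 1)"
      using Suc log_term_le_dist by (intro mult_mono) auto
    then show "v (log_power_term n i * log_power_term 1 (k - i)) \<le> v (q - 1) ^ Suc n"
      by (simp add: v_mult mult.commute)
  qed simp
qed

lemma log_power_sums: "vsums (log_power_term n) (plog v q ^ n)"
proof (induction n)
  case 0
  have "vsums (log_power_term 0) (\<Sum>k<1. log_power_term 0 k)"
    by (rule vsums_finite) (simp add: log_power_term_def)
  moreover have "(\<Sum>k<1. log_power_term 0 k) = 1" by (simp add: log_power_term_def)
  ultimately show ?case by simp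
next
  case (Suc n)
  have "vtendsto v (log_power_term n) 0"
    by (rule vtendsto_zero_geometric[of _ 1 ratio]) (use log_power_term_le_ratio ratio_nonneg ratio_less_1 in auto)
  from vsums_cauchy_product[OF this vtendsto_log_terms Suc plog_sums]
  show ?case by (simp only: log_power_term_Suc[symmetric] power_Suc2)
qed

lemma exp_log_coeff_sum: "(\<Sum>n\<le>k. log_power_term n k / fact n) = (if k \<le> 1 then (q - 1) ^ k else 0)"
proof -
  have "(\<Sum>n\<le>k. log_power_term n k / fact n)
      = (\<Sum>n=0..k. fps_nth (fps_ln 1 ^ n) k / fact n) * (q - 1) ^ k"
    by (simp add: log_power_term_def atLeast0AtMost sum_distrib_right)
  then show ?thesis by (simp add: fps_exp_compose_ln_nth)
qed

lemma exp_log_term_le: assumes "n \<ge> 1" shows "v (log_power_term n k / fact n) \<le> rho * ratio ^ n"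
proof -
  have "v (log_power_term n k / fact n) \<le> v (q - 1) ^ n / v (fact n)"
    using log_power_term_le by (simp add: v_divide divide_right_mono)
  also have "\<dots> \<le> v (q - 1) ^ n / rho ^ (n - 1)"
    using v_fact_ge[of n] zero_less_power[OF rho_pos, of "n - 1"]
    by (intro divide_left_mono) (auto intro: mult_pos_pos)
  also have "\<dots> = rho * ratio ^ n"
    using assms rho_pos by (cases n) (auto simp: ratio_def power_divide field_simps)
  finally show ?thesis .
qed

lemma exp_log_tail_le:
  assumes "N \<ge> 1"
  shows "v ((\<Sum>n\<le>k. log_power_term n k / fact n) - (\<Sum>n<N. log_power_term n k / fact n))
    \<le> rho * ratio ^ N"
proof -
  define H where "H n = log_power_term n k / fact n" for n
  define M where "M = max N (Suc k)"
  have "(\<Sum>n\<le>k. H n) = (\<Sum>n<M. H n)"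
    by (rule sum.mono_neutral_left) (auto simp: M_def H_def log_power_term_eq_0)
  also have "\<dots> = (\<Sum>n<N. H n) + (\<Sum>n\<in>{N..<M}. H n)"
    by (simp add: M_def lessThan_atLeast0 sum.atLeastLessThan_concat)
  finally have "(\<Sum>n\<le>k. H n) - (\<Sum>n<N. H n) = (\<Sum>n\<in>{N..<M}. H n)" by simp
  also have "v \<dots> \<le> rho * ratio ^ N"
  proof (rule v_sum_le)
    fix n assume "n \<in> {N..<M}"
    then have "v (H n) \<le> rho * ratio ^ n" "ratio ^ n \<le> ratio ^ N"
      using exp_log_term_le assms ratio_nonneg ratio_less_1 by (auto simp: H_def intro: power_decreasing)
    then show "v (H n) \<le> rho * ratio ^ N" using rho_pos by (meson mult_left_mono order_trans less_imp_le)
  qed (use rho_pos ratio_nonneg in simp)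
  finally show ?thesis by (simp add: H_def)
qed

lemma pexp_plog: "pexp v (plog v q) = q"
proof -
  define E where "E = (\<lambda>N. \<Sum>n<N. plog v q ^ n / fact n)"
  have "vtendsto v E q"
  proof (rule vtendsto_real_bound[of 1])
    fix N :: nat assume N: "N \<ge> 1"
    have "vsums (\<lambda>k. (\<Sum>n\<le>k. log_power_term n k / fact n) - (\<Sum>n<N. log_power_term n k / fact n))
        (q - E N)"
    proof (rule vsums_diff)
      have "vsums (\<lambda>k. \<Sum>n\<le>k. log_power_term n k / fact n) (\<Sum>k<2. \<Sum>n\<le>k. log_power_term n k / fact n)"
        by (rule vsums_finite) (simp add: exp_log_coeff_sum)
      then show "vsums (\<lambda>k. \<Sum>n\<le>k. log_power_term n k / fact n) q"
        by (simp add: exp_log_coeff_sum numeral_2_eq_2)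
      show "vsums (\<lambda>k. \<Sum>n<N. log_power_term n k / fact n) (E N)"
        unfolding E_def by (intro vsums_sum vsums_divide log_power_sums) simp
    qed
    then have "v (q - E N) \<le> rho * ratio ^ N"
      using exp_log_tail_le[OF N] by (rule vsums_v_le)
    then show "v (E N - q) \<le> rho * ratio ^ N" by (simp add: v_minus_commute)
  next
    show "(\<lambda>N. rho * ratio ^ N) \<longlonglongrightarrow> 0"
      using ratio_nonneg ratio_less_1 by (intro tendsto_mult_right_zero LIMSEQ_power_zero) auto
  qed
  moreover have "vtendsto v E (pexp v (plog v q))"
    using pexp_sums[OF v_plog_less] by (simp add: vsums_def E_def)
  ultimately show ?thesis using vtendsto_unique by blast
qed

end

section \<open>Volkenborn sums of \<open>q\<close>-numbers\<close>

lemma volkenborn_sums_sum: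
  "volkenborn_sums p (\<lambda>x. \<Sum>i\<in>I. c i * f i x) N = (\<Sum>i\<in>I. c i * volkenborn_sums p (f i) N)"
  by (simp add: volkenborn_sums_def sum_divide_distrib sum_distrib_left mult.assoc sum.swap[of _ I])

lemma volkenborn_sums_diff:
  "volkenborn_sums p (\<lambda>x. f x - g x) N = volkenborn_sums p f N - volkenborn_sums p g N"
  by (simp add: volkenborn_sums_def sum_subtractf diff_divide_distrib)

lemma volkenborn_sums_telescope:
  "volkenborn_sums p (\<lambda>x. f (Suc x) - f x) N = (f (p ^ N) - f 0) / of_nat (p ^ N)"
  by (simp add: volkenborn_sums_def sum_lessThan_telescope)

lemma binomial_sum_q_power_integrals:
  fixes q L :: "'a::field"
  shows "(\<Sum>l\<le>n. of_nat (n choose l) * (-1) ^ l / (1 - q) ^ n *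
        (if l = 0 then 1 else of_nat l * L / (q ^ l - 1)))
    = 1 / (1 - q) ^ n * (1 + (\<Sum>l=1..n. of_nat (n choose l) * (-1) ^ (l - 1) * (of_nat l * L / (1 - q ^ l))))"
proof -
  have split: "(\<Sum>l\<le>n. f l) = f 0 + (\<Sum>l=1..n. f l)" for f :: "nat \<Rightarrow> 'a"
    by (simp add: atMost_atLeast0 sum.atLeast_Suc_atMost)
  have "(\<Sum>l=1..n. of_nat (n choose l) * (-1) ^ l / (1 - q) ^ n *
        (if l = 0 then 1 else of_nat l * L / (q ^ l - 1)))
      = (\<Sum>l=1..n. of_nat (n choose l) * (-1) ^ l / (1 - q) ^ n * (of_nat l * L / (q ^ l - 1)))"
    by (rule sum.cong) auto
  also have "\<dots>
      = 1 / (1 - q) ^ n * (\<Sum>l=1..n. of_nat (n choose l) * (-1) ^ (l - 1) * (of_nat l * L / (1 - q ^ l)))"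
    unfolding sum_distrib_left
  proof (intro sum.cong refl)
    fix l :: nat assume "l \<in> {1..n}"
    then have sign: "(-1::'a) ^ l = - ((-1) ^ (l - 1))" by (cases l) auto
    have "of_nat l * L / (q ^ l - 1) = - (of_nat l * L / (1 - q ^ l))"
      by (metis minus_diff_eq divide_minus_right)
    then show "of_nat (n choose l) * (-1) ^ l / (1 - q) ^ n * (of_nat l * L / (q ^ l - 1))
        = 1 / (1 - q) ^ n * (of_nat (n choose l) * (-1) ^ (l - 1) * (of_nat l * L / (1 - q ^ l)))"
      unfolding sign by simp
  qed
  finally show ?thesis
    unfolding split by (simp add: distrib_left)
qed

context padic_log
begin

lemma qpow_eq_power: "qpow v q x = q ^ x"
  using pexp_of_nat_mult[OF v_plog_less, of x] by (simp add: qpow_def pexp_plog)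

lemma qnum_eq: "qnum v q x = (1 - q ^ x) / (1 - q)"
  by (simp add: qnum_def qpow_eq_power)

end

locale padic_qnumbers = padic_log +
  assumes q_ne_1: "q \<noteq> 1"
begin

lemma plog_ne_0: "plog v q \<noteq> 0"
  using pexp_plog pexp_0 q_ne_1 by auto

lemma vtendsto_volkenborn_sums_q_power:
  "vtendsto v (volkenborn_sums p (\<lambda>x. (q ^ l) ^ x))
     (if l = 0 then 1 else of_nat l * plog v q / (q ^ l - 1))"
proof (cases "l = 0")
  case True
  have "volkenborn_sums p (\<lambda>x. (q ^ l) ^ x) N = 1" for N
    using True p_ge_2 by (simp add: volkenborn_sums_def)
  then have "volkenborn_sums p (\<lambda>x. (q ^ l) ^ x) = (\<lambda>N. 1)" by (rule ext)
  then show ?thesis using True vtendsto_const by simp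
next
  case False
  have small: "v (of_nat l * plog v q) < rho"
    using v_of_nat_mult_le[of l] v_plog_less by (rule le_less_trans)
  have "q ^ l = pexp v (of_nat l * plog v q)"
    by (simp add: pexp_of_nat_mult[OF v_plog_less] pexp_plog)
  then show ?thesis
    using vtendsto_volkenborn_sums_pexp_power[OF small] False plog_ne_0 by simp
qed

lemma qnum_power_expand:
  "qnum v q x ^ n = (\<Sum>l\<le>n. of_nat (n choose l) * (-1) ^ l / (1 - q) ^ n * (q ^ l) ^ x)"
proof -
  have "(1 - q ^ x) ^ n = (- (q ^ x) + 1) ^ n" by simp
  also have "\<dots> = (\<Sum>l\<le>n. of_nat (n choose l) * (- (q ^ x)) ^ l * 1 ^ (n - l))"
    by (rule binomial_ring)
  also have "\<dots> = (\<Sum>l\<le>n. of_nat (n choose l) * (-1) ^ l * (q ^ l) ^ x)"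
  proof (intro sum.cong refl)
    fix l
    have "(q ^ x) ^ l = (q ^ l) ^ x" by (simp only: power_mult[symmetric] mult.commute)
    then have "(- (q ^ x)) ^ l = (-1) ^ l * (q ^ l) ^ x" by (subst power_minus) (rule arg_cong)
    then show "of_nat (n choose l) * (- (q ^ x)) ^ l * 1 ^ (n - l) = of_nat (n choose l) * (-1) ^ l * (q ^ l) ^ x"
      by (simp add: mult.assoc)
  qed
  finally have "qnum v q x ^ n = (\<Sum>l\<le>n. of_nat (n choose l) * (-1) ^ l * (q ^ l) ^ x) / (1 - q) ^ n"
    by (simp add: qnum_eq power_divide)
  then show ?thesis by (simp add: sum_divide_distrib)
qed

lemma vtendsto_volkenborn_sums_qnum_power:
  "vtendsto v (volkenborn_sums p (\<lambda>x. qnum v q x ^ n))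
     (1 / (1 - q) ^ n *
      (1 + (\<Sum>l=1..n. of_nat (n choose l) * (-1) ^ (l - 1) * (of_nat l * plog v q / (1 - q ^ l)))))"
proof -
  define c where "c l = of_nat (n choose l) * (-1) ^ l / (1 - q) ^ n" for l
  have "vtendsto v (\<lambda>N. \<Sum>l\<le>n. c l * volkenborn_sums p (\<lambda>x. (q ^ l) ^ x) N)
      (\<Sum>l\<le>n. c l * (if l = 0 then 1 else of_nat l * plog v q / (q ^ l - 1)))"
    by (intro vtendsto_sum vtendsto_cmult vtendsto_volkenborn_sums_q_power) simp
  moreover have "(\<Sum>l\<le>n. c l * volkenborn_sums p (\<lambda>x. (q ^ l) ^ x) N)
      = volkenborn_sums p (\<lambda>x. qnum v q x ^ n) N" for N
    unfolding qnum_power_expand c_def[symmetric] by (rule volkenborn_sums_sum[symmetric])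
  ultimately show ?thesis
    unfolding c_def by (rule vtendsto_cong) (rule binomial_sum_q_power_integrals)
qed

lemma volkenborn_sums_qnum_recursion:
  assumes "n \<ge> 1"
  shows "(\<Sum>k\<le>n. of_nat (n choose k) * q ^ k * volkenborn_sums p (\<lambda>x. qnum v q x ^ k) N)
      - volkenborn_sums p (\<lambda>x. qnum v q x ^ n) N
    = qnum v q (p ^ N) ^ n / of_nat (p ^ N)"
proof -
  have "(\<Sum>k\<le>n. of_nat (n choose k) * q ^ k * qnum v q x ^ k) = qnum v q (Suc x) ^ n" for x
  proof -
    have "qnum v q (Suc x) = q * qnum v q x + 1"
      using q_ne_1 by (simp add: qnum_eq field_simps)
    then show ?thesis by (simp add: binomial_ring power_mult_distrib mult.assoc)
  qed
  then have "(\<Sum>k\<le>n. of_nat (n choose k) * q ^ k * volkenborn_sums p (\<lambda>x. qnum v q x ^ k) N)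
      = volkenborn_sums p (\<lambda>x. qnum v q (Suc x) ^ n) N"
    using volkenborn_sums_sum[of p "\<lambda>k. of_nat (n choose k) * q ^ k" "\<lambda>k x. qnum v q x ^ k" "{..n}" N]
    by simp
  then show ?thesis
    using volkenborn_sums_telescope[of p "\<lambda>x. qnum v q x ^ n" N] assms
    by (simp add: volkenborn_sums_diff qnum_eq)
qed

lemma vtendsto_qnum_p_power_div:
  "vtendsto v (\<lambda>N. qnum v q (p ^ N) / of_nat (p ^ N)) (plog v q / (q - 1))"
proof -
  have "vtendsto v (\<lambda>N. (q ^ p ^ N - 1) / of_nat (p ^ N)) (plog v q)"
    using vtendsto_pexp_difference_quotient[OF v_plog_less] by (simp add: pexp_plog)
  from vtendsto_mult[OF this vtendsto_const[of "inverse (q - 1)"]] show ?thesis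
  proof (rule vtendsto_cong)
    have "q - 1 \<noteq> 0" "1 - q \<noteq> 0" using q_ne_1 by auto
    then show "(q ^ p ^ N - 1) / of_nat (p ^ N) * inverse (q - 1) = qnum v q (p ^ N) / of_nat (p ^ N)" for N
      using p_ge_2 by (simp add: qnum_eq field_simps)
  qed (simp add: divide_inverse)
qed

lemma vtendsto_qnum_p_power_power_div:
  assumes "n \<ge> 1"
  shows "vtendsto v (\<lambda>N. qnum v q (p ^ N) ^ n / of_nat (p ^ N))
    (if n = 1 then plog v q / (q - 1) else 0)"
proof -
  have "vtendsto v (\<lambda>N. of_nat (p ^ N) * (qnum v q (p ^ N) / of_nat (p ^ N))) (0 * (plog v q / (q - 1)))"
    by (rule vtendsto_mult[OF vtendsto_of_nat_p_power vtendsto_qnum_p_power_div])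
  then have "vtendsto v (\<lambda>N. qnum v q (p ^ N)) 0"
    by (rule vtendsto_cong) (use p_ge_2 in simp_all)
  from vtendsto_mult[OF vtendsto_qnum_p_power_div vtendsto_power[OF this, of "n - 1"]]
  show ?thesis
    by (rule vtendsto_cong) (use assms in \<open>auto simp: power_eq_if field_simps\<close>)
qed

end

theorem mainTheorem1:
  fixes p :: nat and v :: "'a::field_char_0 \<Rightarrow> real" and q :: 'a
  assumes "prime p"
    and "Cp_field p v"
    and "v (1 - q) < real p powr (- 1 / (real p - 1))"
    and "q \<noteq> 1"
  shows "(\<forall>n. vconverges v (volkenborn_sums p (\<lambda>x. qnum v q x ^ n)))
    \<and> mod_qbernoulli p v q 0 = 1
    \<and> (\<forall>n\<ge>1. (\<Sum>k\<le>n. of_nat (n choose k) * q ^ k * mod_qbernoulli p v q k)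
                 - mod_qbernoulli p v q n
               = (if n = 1 then plog v q / (q - 1) else 0))
    \<and> (\<forall>n. mod_qbernoulli p v q n
           = 1 / (1 - q) ^ n *
             (1 + (\<Sum>l=1..n. of_nat (n choose l) * (-1) ^ (l - 1) *
                    (of_nat l * plog v q / (1 - q ^ l)))))"
proof -
  interpret padic_field v p
    using assms(1,2) by unfold_locales (simp_all add: Cp_field_def)
  interpret padic_qnumbers v p q
    using assms(3,4) by unfold_locales (simp_all add: rho_def)
  note lim = vtendsto_volkenborn_sums_qnum_power
  have bernoulli: "mod_qbernoulli p v q n = 1 / (1 - q) ^ n *
      (1 + (\<Sum>l=1..n. of_nat (n choose l) * (-1) ^ (l - 1) * (of_nat l * plog v q / (1 - q ^ l))))" for n
    unfolding mod_qbernoulli_def volkenborn_def using lim by (rule vlim_eq)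
  have recursion: "(\<Sum>k\<le>n. of_nat (n choose k) * q ^ k * mod_qbernoulli p v q k) - mod_qbernoulli p v q n
      = (if n = 1 then plog v q / (q - 1) else 0)" if "n \<ge> 1" for n
  proof (rule vtendsto_unique)
    show "vtendsto v (\<lambda>N. qnum v q (p ^ N) ^ n / of_nat (p ^ N))
        ((\<Sum>k\<le>n. of_nat (n choose k) * q ^ k * mod_qbernoulli p v q k) - mod_qbernoulli p v q n)"
      unfolding bernoulli volkenborn_sums_qnum_recursion[OF that, symmetric]
      by (intro vtendsto_diff vtendsto_sum vtendsto_cmult lim) simp
  qed (rule vtendsto_qnum_p_power_power_div[OF that])
  show ?thesis
    using lim recursion bernoulli by (auto simp: vconverges_def)
qed

end
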